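(* Let $p$ be a prime and $V$ a vector space of dimension $d$ over $\mathbb{F}_p$. Let $G_0\le \mathrm{GL}(V)$ be a solvable group acting irreducibly and quasi-primitively on $V$, with structure data $W$, $e$ as described in the context. Let $\mathrm{rad}(e)$ denote the product of the distinct prime divisors of $e$. Then $\mathrm{rad}(e)$ divides $|W|-1$.
   Context: $G_0$ is quasi-primitive on $V$: every normal subgroup of $G_0$ acts homogeneously on $V$. Structure data: subgroups $Z(E)\le U\le F\le A\le G_0$, each normal in $G_0$, and a characteristic subgroup $E$ of $F$, such that: (i) $F=EU$ is a central product with $E\cap U=Z(E)$; (ii) $F/U\cong E/Z(E)$ and $E/Z(E)$ is a direct sum of completely reducible $G_0/F$-modules; (iii) $E=E_1\times\cdots\times E_s$ with $E_i$ an extraspecial $q_i$-group of order $q_i^{2m_i+1}$, the $q_i$ distinct primes and $m_i\ge 1$; $e:=\prod_i q_i^{m_i}$, $e\mid d$, $\gcd(p,e)=1$; (iv) $A=C_{G_0}(U)$ and $A/F$ acts faithfully on $E/Z(E)$; (v) $U$ is cyclic and acts fixed-point-freely on $W$, an irreducible $\mathbb{F}_pU$-submodule of $V$; (vi) $|U|$ divides $p^k-1$ for some $k\ge1$ and $W$ is identified with the $\mathbb{F}_p$-span of $U$, isomorphic to $\mathbb{F}_{p^k}$, so $|W|=p^k$; (vii) $|V|=|W|^{eb}$ for some positive integer $b$. *)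

theory Defs
  imports "HOL-Algebra.Algebra"
begin

text \<open>The vector space V over F_p is modelled as the finite elementary abelian
p-group given by the type 'v (an F_p-vector space is exactly such a group, and
F_p-linear maps are exactly the additive maps).\<close>

definition elem_ab :: "nat \<Rightarrow> 'v::ab_group_add itself \<Rightarrow> bool" where
  "elem_ab p _ \<longleftrightarrow> (\<forall>x::'v. (\<Sum>_\<in>{..<p}. x) = 0)"

definition GLV :: "('v::ab_group_add \<Rightarrow> 'v) monoid" where
  "GLV = \<lparr>carrier = {f. bij f \<and> (\<forall>x y. f (x + y) = f x + f y)}, monoid.mult = (\<circ>), one = id\<rparr>"

abbreviation grp :: "('v::ab_group_add \<Rightarrow> 'v) set \<Rightarrow> ('v \<Rightarrow> 'v) monoid" where
  "grp S \<equiv> GLV\<lparr>carrier := S\<rparr>"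

definition center :: "('a, 'b) monoid_scheme \<Rightarrow> 'a set" where
  "center H = {x \<in> carrier H. \<forall>y\<in>carrier H. x \<otimes>\<^bsub>H\<^esub> y = y \<otimes>\<^bsub>H\<^esub> x}"

definition maximal_subgroup :: "('a, 'b) monoid_scheme \<Rightarrow> 'a set \<Rightarrow> bool" where
  "maximal_subgroup H M \<longleftrightarrow> subgroup M H \<and> M \<noteq> carrier H \<and>
     (\<forall>K. subgroup K H \<and> M \<subseteq> K \<longrightarrow> K = M \<or> K = carrier H)"

definition frattini :: "('a, 'b) monoid_scheme \<Rightarrow> 'a set" where
  "frattini H = {x \<in> carrier H. \<forall>M. maximal_subgroup H M \<longrightarrow> x \<in> M}"

definition extraspecial :: "nat \<Rightarrow> nat \<Rightarrow> ('a, 'b) monoid_scheme \<Rightarrow> bool" where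
  "extraspecial q m H \<longleftrightarrow> group H \<and> finite (carrier H) \<and>
     card (carrier H) = q ^ (2 * m + 1) \<and> card (center H) = q \<and>
     derived H (carrier H) = center H \<and> frattini H = center H"

definition characteristic :: "('a, 'b) monoid_scheme \<Rightarrow> 'a set \<Rightarrow> bool" where
  "characteristic H K \<longleftrightarrow> subgroup K H \<and> (\<forall>\<phi>\<in>iso H H. \<phi> ` K = K)"

definition cyclic_sg :: "('a, 'b) monoid_scheme \<Rightarrow> 'a set \<Rightarrow> bool" where
  "cyclic_sg G U \<longleftrightarrow> (\<exists>g\<in>U. U = generate G {g})"

text \<open>Modules: F_p-subspaces of V are the additive subgroups.\<close>
definition addsub :: "'v::ab_group_add set \<Rightarrow> bool" where
  "addsub W \<longleftrightarrow> 0 \<in> W \<and> (\<forall>x\<in>W. \<forall>y\<in>W. x + y \<in> W) \<and> (\<forall>x\<in>W. - x \<in> W)"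

definition addspan :: "'v::ab_group_add set \<Rightarrow> 'v set" where
  "addspan Y = {x. \<forall>W. addsub W \<and> Y \<subseteq> W \<longrightarrow> x \<in> W}"

definition submod :: "('v::ab_group_add \<Rightarrow> 'v) set \<Rightarrow> 'v set \<Rightarrow> bool" where
  "submod N W \<longleftrightarrow> addsub W \<and> (\<forall>g\<in>N. g ` W \<subseteq> W)"

definition irred_mod :: "('v::ab_group_add \<Rightarrow> 'v) set \<Rightarrow> 'v set \<Rightarrow> bool" where
  "irred_mod N W \<longleftrightarrow> submod N W \<and> W \<noteq> {0} \<and>
     (\<forall>W'. submod N W' \<and> W' \<subseteq> W \<longrightarrow> W' = {0} \<or> W' = W)"

definition iso_mod :: "('v::ab_group_add \<Rightarrow> 'v) set \<Rightarrow> 'v set \<Rightarrow> 'v set \<Rightarrow> bool" where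
  "iso_mod N W1 W2 \<longleftrightarrow> (\<exists>\<phi>. bij_betw \<phi> W1 W2 \<and>
     (\<forall>x\<in>W1. \<forall>y\<in>W1. \<phi> (x + y) = \<phi> x + \<phi> y) \<and>
     (\<forall>g\<in>N. \<forall>x\<in>W1. \<phi> (g x) = g (\<phi> x)))"

definition homogeneous :: "('v::ab_group_add \<Rightarrow> 'v) set \<Rightarrow> bool" where
  "homogeneous N \<longleftrightarrow> (\<exists>S. (\<forall>W\<in>S. irred_mod N W) \<and>
     (\<forall>W1\<in>S. \<forall>W2\<in>S. iso_mod N W1 W2) \<and> addspan (\<Union>S) = UNIV)"

definition irreducible_on_V :: "('v::ab_group_add \<Rightarrow> 'v) set \<Rightarrow> bool" where
  "irreducible_on_V G0 \<longleftrightarrow> irred_mod G0 UNIV"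

definition quasi_primitive :: "('v::ab_group_add \<Rightarrow> 'v) set \<Rightarrow> bool" where
  "quasi_primitive G0 \<longleftrightarrow> (\<forall>N. N \<lhd> grp G0 \<longrightarrow> homogeneous N)"

text \<open>E/Z is a completely reducible module for G0 acting by conjugation:
every G0-invariant subgroup M with Z \<le> M \<le> E has a G0-invariant complement
modulo Z.\<close>
definition conj_inv :: "('v::ab_group_add \<Rightarrow> 'v) set \<Rightarrow> ('v \<Rightarrow> 'v) set \<Rightarrow> bool" where
  "conj_inv G0 M \<longleftrightarrow> (\<forall>g\<in>G0. \<forall>x\<in>M. g \<otimes>\<^bsub>GLV\<^esub> x \<otimes>\<^bsub>GLV\<^esub> inv\<^bsub>GLV\<^esub> g \<in> M)"

definition compl_red_quot ::
  "('v::ab_group_add \<Rightarrow> 'v) set \<Rightarrow> ('v \<Rightarrow> 'v) set \<Rightarrow> ('v \<Rightarrow> 'v) set \<Rightarrow> bool" where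
  "compl_red_quot G0 E Z \<longleftrightarrow> (\<forall>M. subgroup M (grp E) \<and> Z \<subseteq> M \<and> conj_inv G0 M \<longrightarrow>
     (\<exists>M'. subgroup M' (grp E) \<and> Z \<subseteq> M' \<and> conj_inv G0 M' \<and>
        M \<inter> M' = Z \<and> M <#>\<^bsub>GLV\<^esub> M' = E))"

definition rad :: "nat \<Rightarrow> nat" where
  "rad n = (\<Prod>q\<in>prime_factors n. q)"

end

theory Submission
  imports Defs
begin

text \<open>The centre of each extraspecial factor \<open>E\<^sub>i\<close> is a subgroup of order \<open>q\<^sub>i\<close>.
Since the factors commute elementwise, it centralises all of \<open>E\<close>, so it lies in
\<open>Z(E) \<subseteq> U\<close>; by Lagrange \<open>q\<^sub>i\<close> divides \<open>|U|\<close>, which divides \<open>p\<^sup>k - 1 = |W| - 1\<close>.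
The prime divisors of \<open>e\<close> are exactly the \<open>q\<^sub>i\<close>, and distinct primes dividing a
number divide it jointly.\<close>

lemma group_GLV: "group (GLV :: ('v::ab_group_add \<Rightarrow> 'v) monoid)"
proof (rule groupI)
  fix f g :: "'v \<Rightarrow> 'v"
  assume "f \<in> carrier GLV" "g \<in> carrier GLV"
  then show "f \<otimes>\<^bsub>GLV\<^esub> g \<in> carrier GLV"
    by (auto simp: GLV_def bij_comp)
next
  fix f :: "'v \<Rightarrow> 'v"
  assume "f \<in> carrier GLV"
  then have bij: "bij f" and additive: "\<And>x y. f (x + y) = f x + f y"
    by (auto simp: GLV_def)
  have "Hilbert_Choice.inv f (x + y) = Hilbert_Choice.inv f x + Hilbert_Choice.inv f y" for x y
  proof -
    have "f (Hilbert_Choice.inv f x + Hilbert_Choice.inv f y) = x + y"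
      using bij additive by (simp add: bij_is_surj surj_f_inv_f)
    then show ?thesis using bij by (metis bij_inv_eq_iff)
  qed
  moreover have "Hilbert_Choice.inv f \<circ> f = id" using bij by (simp add: bij_is_inj)
  ultimately show "\<exists>g\<in>carrier GLV. g \<otimes>\<^bsub>GLV\<^esub> f = \<one>\<^bsub>GLV\<^esub>"
    using bij by (intro bexI[of _ "Hilbert_Choice.inv f"]) (auto simp: GLV_def bij_imp_bij_inv)
qed (auto simp: GLV_def o_assoc)

lemma (in group) commute_inv_right:
  assumes "x \<in> carrier G" "h \<in> carrier G" "x \<otimes> h = h \<otimes> x"
  shows "x \<otimes> inv h = inv h \<otimes> x"
  by (metis assms conjugation_is_surj inv_closed inv_solve_right m_closed)

lemma (in group) commute_generate:
  assumes x: "x \<in> carrier G" and S: "S \<subseteq> carrier G"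
    and commutes: "\<forall>h\<in>S. x \<otimes> h = h \<otimes> x"
    and y: "y \<in> generate G S"
  shows "x \<otimes> y = y \<otimes> x"
  using y
proof (induction rule: generate.induct)
  case one
  show ?case using x by simp
next
  case (incl h)
  then show ?case using commutes by blast
next
  case (inv h)
  then show ?case using x S commutes commute_inv_right by blast
next
  case (eng h1 h2)
  have "h1 \<in> carrier G" "h2 \<in> carrier G"
    using eng.hyps generate_incl[OF S] by auto
  then show ?case using x eng.IH by (metis m_assoc)
qed

lemma center_restrict_carrier:
  "center (G\<lparr>carrier := H\<rparr>) = {x \<in> H. \<forall>y\<in>H. x \<otimes>\<^bsub>G\<^esub> y = y \<otimes>\<^bsub>G\<^esub> x}"
  by (simp add: center_def)

lemma (in group) subgroup_center_of_subgroup: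
  assumes H: "subgroup H G"
  shows "subgroup (center (G\<lparr>carrier := H\<rparr>)) G"
  unfolding center_restrict_carrier
proof (rule subgroupI)
  have H_carrier: "H \<subseteq> carrier G" using H subgroup.subset by blast
  then show "{x \<in> H. \<forall>y\<in>H. x \<otimes> y = y \<otimes> x} \<subseteq> carrier G" by blast
  have "\<one> \<in> {x \<in> H. \<forall>y\<in>H. x \<otimes> y = y \<otimes> x}"
    using subgroup.one_closed[OF H] H_carrier by auto
  then show "{x \<in> H. \<forall>y\<in>H. x \<otimes> y = y \<otimes> x} \<noteq> {}" by blast
  fix a b
  assume "a \<in> {x \<in> H. \<forall>y\<in>H. x \<otimes> y = y \<otimes> x}" "b \<in> {x \<in> H. \<forall>y\<in>H. x \<otimes> y = y \<otimes> x}"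
  then have a: "a \<in> H" "\<forall>y\<in>H. a \<otimes> y = y \<otimes> a" and b: "b \<in> H" "\<forall>y\<in>H. b \<otimes> y = y \<otimes> b"
    by blast+
  have "inv a \<otimes> y = y \<otimes> inv a" if y: "y \<in> H" for y
  proof (rule sym, rule commute_inv_right)
    show "y \<in> carrier G" "a \<in> carrier G" using y a(1) H_carrier by blast+
    show "y \<otimes> a = a \<otimes> y" using a(2) y by metis
  qed
  then show "inv a \<in> {x \<in> H. \<forall>y\<in>H. x \<otimes> y = y \<otimes> x}"
    using a(1) subgroup.m_inv_closed[OF H] by blast
  have "a \<otimes> b \<otimes> y = y \<otimes> (a \<otimes> b)" if y: "y \<in> H" for y
  proof -
    have carrier: "a \<in> carrier G" "b \<in> carrier G" "y \<in> carrier G"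
      using a(1) b(1) y H_carrier by blast+
    have a_comm: "a \<otimes> y = y \<otimes> a" and b_comm: "b \<otimes> y = y \<otimes> b" using a(2) b(2) y by blast+
    have "a \<otimes> b \<otimes> y = a \<otimes> (b \<otimes> y)" using carrier by (simp only: m_assoc)
    also have "\<dots> = a \<otimes> (y \<otimes> b)" by (simp only: b_comm)
    also have "\<dots> = a \<otimes> y \<otimes> b" using carrier by (simp only: m_assoc)
    also have "\<dots> = y \<otimes> a \<otimes> b" by (simp only: a_comm)
    also have "\<dots> = y \<otimes> (a \<otimes> b)" using carrier by (simp only: m_assoc)
    finally show ?thesis .
  qed
  then show "a \<otimes> b \<in> {x \<in> H. \<forall>y\<in>H. x \<otimes> y = y \<otimes> x}"
    using a(1) b(1) subgroup.m_closed[OF H] by blast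
qed

lemma (in group) subgroup_card_dvd:
  assumes K: "subgroup K G" and H: "subgroup H G" and "K \<subseteq> H"
  shows "card K dvd card H"
proof -
  interpret H: group "G\<lparr>carrier := H\<rparr>" using subgroup_imp_group[OF H] .
  have "subgroup K (G\<lparr>carrier := H\<rparr>)" using subgroup_incl[OF K H \<open>K \<subseteq> H\<close>] .
  then have "card (rcosets\<^bsub>G\<lparr>carrier := H\<rparr>\<^esub> K) * card K = card H"
    using H.lagrange by (simp add: order_def)
  then show ?thesis by (metis dvd_triv_right)
qed

lemma (in group) center_factor_subset_center_generate:
  assumes factors: "\<And>j. j \<in> J \<Longrightarrow> K j \<subseteq> carrier G"
    and commute: "\<And>j j'. j \<in> J \<Longrightarrow> j' \<in> J \<Longrightarrow> j \<noteq> j' \<Longrightarrow>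
       \<forall>x\<in>K j. \<forall>y\<in>K j'. x \<otimes> y = y \<otimes> x"
    and i: "i \<in> J"
  shows "center (G\<lparr>carrier := K i\<rparr>) \<subseteq> center (G\<lparr>carrier := generate G (\<Union>j\<in>J. K j)\<rparr>)"
proof
  fix x assume "x \<in> center (G\<lparr>carrier := K i\<rparr>)"
  then have x: "x \<in> K i" and central: "\<forall>y\<in>K i. x \<otimes> y = y \<otimes> x"
    unfolding center_restrict_carrier by blast+
  have S: "(\<Union>j\<in>J. K j) \<subseteq> carrier G" using factors by blast
  have "\<forall>h\<in>(\<Union>j\<in>J. K j). x \<otimes> h = h \<otimes> x"
    using central commute i x by blast
  then have "\<forall>y\<in>generate G (\<Union>j\<in>J. K j). x \<otimes> y = y \<otimes> x"
    using commute_generate S x i factors by blast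
  moreover have "x \<in> generate G (\<Union>j\<in>J. K j)" using x i by (blast intro: generate.incl)
  ultimately show "x \<in> center (G\<lparr>carrier := generate G (\<Union>j\<in>J. K j)\<rparr>)"
    unfolding center_restrict_carrier by blast
qed

lemma prod_distinct_primes_dvd:
  fixes P :: "'a::factorial_semiring_gcd set"
  assumes "finite P" "\<And>q. q \<in> P \<Longrightarrow> Factorial_Ring.prime q" "\<And>q. q \<in> P \<Longrightarrow> q dvd n"
  shows "\<Prod>P dvd n"
  using assms
proof (induction P rule: finite_induct)
  case (insert q P)
  have "coprime q (\<Prod>P)"
    using insert by (intro prod_coprime_right primes_coprime) auto
  then show ?case using insert by (simp add: divides_mult)
qed simp

lemma rad_dvdI:
  assumes "\<And>q. q \<in> prime_factors n \<Longrightarrow> q dvd m"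
  shows "rad n dvd m"
  unfolding rad_def using prod_distinct_primes_dvd[of "prime_factors n"] assms by auto

theorem lemma2p6:
  fixes p d :: nat
    and G0 A F U E :: "('v::{ab_group_add, finite} \<Rightarrow> 'v) set"
    and s :: nat and Es :: "nat \<Rightarrow> ('v \<Rightarrow> 'v) set" and q m :: "nat \<Rightarrow> nat"
    and e k b :: nat and W :: "'v set"
  assumes prime_p: "Factorial_Ring.prime p"
    and V_elem: "elem_ab p TYPE('v)"
    and V_dim: "card (UNIV :: 'v set) = p ^ d"
    and G0_sub: "subgroup G0 GLV"
    and G0_solv: "solvable (grp G0)"
    and G0_irr: "irreducible_on_V G0"
    and G0_qp: "quasi_primitive G0"
    \<comment> \<open>structure data\<close>
    and ZU: "center (grp E) \<subseteq> U" and UF: "U \<subseteq> F" and FA: "F \<subseteq> A" and AG: "A \<subseteq> G0"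
    and U_nml: "U \<lhd> grp G0" and F_nml: "F \<lhd> grp G0" and A_nml: "A \<lhd> grp G0"
    and Z_nml: "center (grp E) \<lhd> grp G0"
    and E_char: "characteristic (grp F) E"
    \<comment> \<open>(i) central product\<close>
    and i_prod: "F = E <#>\<^bsub>GLV\<^esub> U"
    and i_comm: "\<forall>x\<in>E. \<forall>u\<in>U. x \<otimes>\<^bsub>GLV\<^esub> u = u \<otimes>\<^bsub>GLV\<^esub> x"
    and i_int: "E \<inter> U = center (grp E)"
    \<comment> \<open>(ii)\<close>
    and ii_iso: "(grp F Mod U) \<cong> (grp E Mod center (grp E))"
    and ii_cr: "compl_red_quot G0 E (center (grp E))"
    \<comment> \<open>(iii)\<close>
    and iii_sub: "\<forall>i<s. subgroup (Es i) (grp E)"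
    and iii_comm: "\<forall>i<s. \<forall>j<s. i \<noteq> j \<longrightarrow>
         (\<forall>x\<in>Es i. \<forall>y\<in>Es j. x \<otimes>\<^bsub>GLV\<^esub> y = y \<otimes>\<^bsub>GLV\<^esub> x)"
    and iii_gen: "E = generate GLV (\<Union>i<s. Es i)"
    and iii_indep: "\<forall>i<s. Es i \<inter> generate GLV (\<Union>j\<in>{..<s} - {i}. Es j) = {\<one>\<^bsub>GLV\<^esub>}"
    and iii_es: "\<forall>i<s. extraspecial (q i) (m i) (grp (Es i))"
    and iii_q: "\<forall>i<s. Factorial_Ring.prime (q i)" and iii_qd: "inj_on q {..<s}"
    and iii_m: "\<forall>i<s. m i \<ge> 1"
    and iii_e: "e = (\<Prod>i<s. q i ^ m i)" and e_dvd: "e dvd d" and e_cop: "coprime p e"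
    \<comment> \<open>(iv)\<close>
    and iv_A: "A = {g \<in> G0. \<forall>u\<in>U. g \<otimes>\<^bsub>GLV\<^esub> u = u \<otimes>\<^bsub>GLV\<^esub> g}"
    and iv_faith: "{a \<in> A. \<forall>x\<in>E. a \<otimes>\<^bsub>GLV\<^esub> x \<otimes>\<^bsub>GLV\<^esub> inv\<^bsub>GLV\<^esub> a
                        \<otimes>\<^bsub>GLV\<^esub> inv\<^bsub>GLV\<^esub> x \<in> center (grp E)} = F"
    \<comment> \<open>(v)\<close>
    and v_cyc: "cyclic_sg GLV U"
    and v_W: "irred_mod U W"
    and v_fpf: "\<forall>u\<in>U. u \<noteq> \<one>\<^bsub>GLV\<^esub> \<longrightarrow> (\<forall>w\<in>W. u w = w \<longrightarrow> w = 0)"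
    \<comment> \<open>(vi)\<close>
    and vi_k: "k \<ge> 1" and vi_U: "card U dvd p ^ k - 1" and vi_W: "card W = p ^ k"
    \<comment> \<open>(vii)\<close>
    and vii: "b > 0" "card (UNIV :: 'v set) = card W ^ (e * b)"
  shows "rad e dvd card W - 1"
proof -
  interpret GLV: group "GLV :: ('v \<Rightarrow> 'v) monoid" by (rule group_GLV)
  have F_sub: "subgroup F GLV" and U_sub: "subgroup U GLV"
    using F_nml U_nml G0_sub by (auto intro: GLV.incl_subgroup normal_imp_subgroup)
  have E_sub: "subgroup E GLV"
    using E_char F_sub by (auto simp: characteristic_def intro: GLV.incl_subgroup)
  have Es_sub: "subgroup (Es i) GLV" if "i < s" for i
    using iii_sub E_sub that by (auto intro: GLV.incl_subgroup)
  have q_dvd: "q i dvd card W - 1" if i: "i < s" for i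
  proof -
    have "center (grp (Es i)) \<subseteq> center (grp E)"
      unfolding iii_gen using i iii_comm Es_sub[THEN subgroup.subset]
      by (intro GLV.center_factor_subset_center_generate) auto
    then have "card (center (grp (Es i))) dvd card U"
      using ZU U_sub Es_sub[OF i] by (intro GLV.subgroup_card_dvd GLV.subgroup_center_of_subgroup) auto
    moreover have "card (center (grp (Es i))) = q i"
      using iii_es i by (simp add: extraspecial_def)
    ultimately show ?thesis using vi_U vi_W by (metis dvd_trans)
  qed
  show ?thesis
  proof (rule rad_dvdI)
    fix r assume r: "r \<in> prime_factors e"
    then have r_prime: "Factorial_Ring.prime r" and "r dvd (\<Prod>i<s. q i ^ m i)"
      using iii_e by auto
    then obtain i where i: "i < s" and "r dvd q i ^ m i"
      by (auto simp: prime_dvd_prod_iff)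
    then have "r = q i"
      using r_prime iii_q by (auto dest: prime_dvd_power intro: primes_dvd_imp_eq)
    then show "r dvd card W - 1" using q_dvd i by simp
  qed
qed

end
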